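(* Let $A\in\mathbb{R}^{n\times n}$, let $s$ be an integer with $1\leq s<d(A)$, and let $v_0\in\mathbb{R}^n$ with $\|v_0\|=1$ and $d(A,v_0)\geq s+1$. Then all vectors of the Arnoldi cross iteration ACI($s$) started at $v_0$ are well defined (i.e. $\widetilde w_k\neq 0$ and $\widetilde v_{k+1}\neq 0$ for all $k$, with $d(A,v_k)\geq s+1$ and $d(A^T,w_k)\geq s+1$), and $$\|\widetilde w_k\|\leq\|\widetilde v_{k+1}\|\leq\|\widetilde w_{k+1}\|\leq\|\widetilde v_{k+2}\|\leq\Phi_s(A^T)=\Phi_s(A),\qquad k=0,1,2,\dots.$$ Moreover, $\|\widetilde w_k\|=\|\widetilde v_{k+1}\|$ holds if and only if $v_k=\alpha v_{k+1}$ for some $\alpha\neq 0$, and $\|\widetilde v_{k+1}\|=\|\widetilde w_{k+1}\|$ holds if and only if $w_k=\beta w_{k+1}$ for some $\beta\neq 0$.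
   Context: Notation: for $A\in\mathbb{R}^{n\times n}$, $d(A)$ is the degree of the minimal polynomial of $A$, $d(A,v)$ is the grade of $v$ w.r.t. $A$ (degree of the monic polynomial $p$ of smallest degree with $p(A)v=0$), $\mathcal{K}_k(A,v)=\mathrm{span}\{v,Av,\dots,A^{k-1}v\}$, $\mathcal{M}_s$ is the set of real monic polynomials of degree $s$, and $\|\cdot\|$ is the Euclidean norm. For a matrix $B$ and a vector $u$ with $d(B,u)\geq s$, let $P_s(\cdot\,;u)_B\in\mathcal{M}_s$ be the unique monic polynomial with $P_s(B;u)u\perp\mathcal{K}_s(B,u)$ (equivalently $P_s(B;u)u\in B^su+\mathcal{K}_s(B,u)$ orthogonal to $\mathcal{K}_s(B,u)$). The Arnoldi cross iteration ACI($s$) started at $v_0$ is: for $k=0,1,2,\dots$: $\widetilde w_k=P_s(A;v_k)v_k$ (polynomial determined with respect to $A$), $w_k=\widetilde w_k/\|\widetilde w_k\|$, $\widetilde v_{k+1}=P_s(A^T;w_k)w_k$ (polynomial determined with respect to $A^T$, so $\widetilde v_{k+1}\perp\mathcal{K}_s(A^T,w_k)$), $v_{k+1}=\widetilde v_{k+1}/\|\widetilde v_{k+1}\|$. Finally $\Phi_s(A):=\max_{v\in\mathbb{R}^n,\|v\|=1}\min_{p\in\mathcal{M}_s}\|p(A)v\|$. *)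

theory Defs
  imports "HOL-Analysis.Analysis" "HOL-Computational_Algebra.Polynomial"
begin

definition polyapp :: "real poly \<Rightarrow> real^'n^'n \<Rightarrow> real^'n \<Rightarrow> real^'n" where
  "polyapp p B u = (\<Sum>i\<le>degree p. coeff p i *\<^sub>R (((\<lambda>x. B *v x) ^^ i) u))"

definition monic_polys :: "nat \<Rightarrow> real poly set" where
  "monic_polys s = {p. degree p = s \<and> lead_coeff p = 1}"

definition minpoly_deg :: "real^'n^'n \<Rightarrow> nat" where
  "minpoly_deg A = (LEAST k. \<exists>p\<in>monic_polys k. \<forall>v. polyapp p A v = 0)"

definition grade :: "real^'n^'n \<Rightarrow> real^'n \<Rightarrow> nat" where
  "grade A v = (LEAST k. \<exists>p\<in>monic_polys k. polyapp p A v = 0)"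

definition krylov :: "nat \<Rightarrow> real^'n^'n \<Rightarrow> real^'n \<Rightarrow> (real^'n) set" where
  "krylov k A v = span {((\<lambda>x. A *v x) ^^ i) v | i. i < k}"

definition arnoldi_poly :: "nat \<Rightarrow> real^'n^'n \<Rightarrow> real^'n \<Rightarrow> real poly" where
  "arnoldi_poly s B u = (THE p. p \<in> monic_polys s \<and>
      (\<forall>y\<in>krylov s B u. inner (polyapp p B u) y = 0))"

definition arnoldi_vec :: "nat \<Rightarrow> real^'n^'n \<Rightarrow> real^'n \<Rightarrow> real^'n" where
  "arnoldi_vec s B u = polyapp (arnoldi_poly s B u) B u"

definition normalize_vec :: "real^'n \<Rightarrow> real^'n" where
  "normalize_vec x = (1 / norm x) *\<^sub>R x"

fun aci_v :: "nat \<Rightarrow> real^'n^'n \<Rightarrow> real^'n \<Rightarrow> nat \<Rightarrow> real^'n" where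
  "aci_v s A v0 0 = v0"
| "aci_v s A v0 (Suc k) =
     (let w = normalize_vec (arnoldi_vec s A (aci_v s A v0 k))
      in normalize_vec (arnoldi_vec s (transpose A) w))"

definition aci_wt :: "nat \<Rightarrow> real^'n^'n \<Rightarrow> real^'n \<Rightarrow> nat \<Rightarrow> real^'n" where
  "aci_wt s A v0 k = arnoldi_vec s A (aci_v s A v0 k)"

definition aci_w :: "nat \<Rightarrow> real^'n^'n \<Rightarrow> real^'n \<Rightarrow> nat \<Rightarrow> real^'n" where
  "aci_w s A v0 k = normalize_vec (aci_wt s A v0 k)"

text \<open>tilde v_(k+1) = P_s(A^T;w_k)w_k  (aci_vt s A v0 k denotes tilde v_(k+1))\<close>
definition aci_vt_next :: "nat \<Rightarrow> real^'n^'n \<Rightarrow> real^'n \<Rightarrow> nat \<Rightarrow> real^'n" where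
  "aci_vt_next s A v0 k = arnoldi_vec s (transpose A) (aci_w s A v0 k)"

definition Phi :: "nat \<Rightarrow> real^'n^'n \<Rightarrow> real" where
  "Phi s A = (SUP v\<in>{v. norm v = 1}. (INF p\<in>monic_polys s. norm (polyapp p A v)))"

end

theory Submission
  imports Defs
begin

text \<open>
  Write \<open>W = P\<^sub>s(A;v)v\<close>, \<open>w = W / \<parallel>W\<parallel>\<close> and \<open>V = P\<^sub>s(A\<^sup>T;w)w\<close>. For every monic q of
  degree s, q(A)v differs from W by an element of \<open>\<K>\<^sub>s(A,v)\<close>, to which w is orthogonal, so
  \<open>\<langle>v, q(A\<^sup>T)w\<rangle> = \<langle>q(A)v, w\<rangle> = \<parallel>W\<parallel>\<close>. Hence no monic q of degree s annihilates w, so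
  the grade condition passes from v to w, and taking \<open>q = P\<^sub>s(A\<^sup>T;w)\<close> gives
  \<open>\<parallel>W\<parallel> = \<langle>v, V\<rangle> \<le> \<parallel>V\<parallel>\<close> by Cauchy-Schwarz, with equality iff v is a positive multiple of V.
  The same step with A and \<open>A\<^sup>T\<close> exchanged gives the other inequalities. Since \<open>\<parallel>P\<^sub>s(B;u)u\<parallel>\<close>
  is the least of the \<open>\<parallel>q(B)u\<parallel>\<close> over monic q, we get \<open>\<parallel>V\<parallel> \<le> \<Phi>\<^sub>s(A\<^sup>T)\<close>, and one cross
  step from every unit vector gives \<open>\<Phi>\<^sub>s(A) \<le> \<Phi>\<^sub>s(A\<^sup>T)\<close>, hence equality by symmetry.
\<close>

abbreviation matvec :: "real^'n^'n \<Rightarrow> real^'n \<Rightarrow> real^'n" where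
  "matvec B \<equiv> (\<lambda>x. B *v x)"

lemma polyapp_eq_sum_atMost:
  assumes "degree p \<le> N"
  shows "polyapp p B u = (\<Sum>i\<le>N. coeff p i *\<^sub>R (matvec B ^^ i) u)"
  unfolding polyapp_def
  by (rule sum.mono_neutral_left) (use assms in \<open>auto simp: coeff_eq_0\<close>)

lemma polyapp_add: "polyapp (p + q) B u = polyapp p B u + polyapp q B u"
proof -
  let ?N = "max (degree p) (degree q)"
  have "degree (p + q) \<le> ?N" by (rule degree_add_le) auto
  then show ?thesis
    by (simp add: polyapp_eq_sum_atMost[of _ ?N] scaleR_add_left sum.distrib)
qed

lemma polyapp_diff: "polyapp (p - q) B u = polyapp p B u - polyapp q B u"
proof -
  let ?N = "max (degree p) (degree q)"
  have "degree (p - q) \<le> ?N" by (rule degree_diff_le) auto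
  then show ?thesis
    by (simp add: polyapp_eq_sum_atMost[of _ ?N] scaleR_diff_left sum_subtractf)
qed

lemma polyapp_smult: "polyapp (smult c p) B u = c *\<^sub>R polyapp p B u"
  by (simp add: polyapp_eq_sum_atMost[OF degree_smult_le] polyapp_def scaleR_sum_right)

lemma polyapp_monom_1: "polyapp (monom 1 k) B u = (matvec B ^^ k) u"
proof -
  have "polyapp (monom 1 k) B u = (\<Sum>i\<le>k. if i = k then (matvec B ^^ k) u else 0)"
    by (rule trans[OF polyapp_eq_sum_atMost[OF degree_monom_le]], rule sum.cong)
      (auto simp: coeff_monom)
  then show ?thesis by simp
qed

lemma polyapp_pCons: "polyapp (pCons a q) B u = a *\<^sub>R u + B *v polyapp q B u"
proof -
  have "polyapp (pCons a q) B u =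
      a *\<^sub>R u + (\<Sum>i\<le>degree q. coeff q i *\<^sub>R (B *v (matvec B ^^ i) u))"
    unfolding polyapp_eq_sum_atMost[OF degree_pCons_le] by (subst sum.atMost_Suc_shift) simp
  also have "\<dots> = a *\<^sub>R u + B *v polyapp q B u"
    by (simp add: polyapp_def linear_sum[OF matrix_vector_mul_linear] matrix_vector_mult_scaleR)
  finally show ?thesis .
qed

lemma polyapp_monom_1_mult: "polyapp (monom 1 j * q) B u = (matvec B ^^ j) (polyapp q B u)"
proof (induction j)
  case 0
  then show ?case by (simp add: monom_0 one_pCons[symmetric])
next
  case (Suc j)
  have "monom 1 (Suc j) * q = pCons 0 (monom 1 j * q)"
    by (simp add: monom_Suc)
  then show ?case using Suc by (simp add: polyapp_pCons)
qed

lemma inner_matrix_vector_mult_transpose: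
  fixes B :: "real^'n^'n"
  shows "inner (B *v x) y = inner x (transpose B *v y)"
proof -
  have "inner x (adjoint (matvec B) y) = inner (B *v x) y" by (rule adjoint_works) simp
  then show ?thesis by (simp only: adjoint_matrix)
qed

lemma inner_funpow_matrix_vector_mult:
  "inner ((matvec B ^^ i) x) y = inner x ((matvec (transpose B) ^^ i) y)"
proof (induction i arbitrary: y)
  case (Suc i)
  have "inner ((matvec B ^^ Suc i) x) y = inner ((matvec B ^^ i) x) (transpose B *v y)"
    by (simp only: funpow.simps(2) comp_def inner_matrix_vector_mult_transpose)
  also have "\<dots> = inner x ((matvec (transpose B) ^^ Suc i) y)"
    by (simp only: Suc funpow_Suc_right comp_def)
  finally show ?case .
qed simp

lemma inner_polyapp_transpose:
  "inner (polyapp p B u) w = inner u (polyapp p (transpose B) w)"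
  unfolding polyapp_def inner_sum_left inner_sum_right
  by (simp only: inner_scaleR_left inner_scaleR_right inner_funpow_matrix_vector_mult)

lemma monom_1_in_monic_polys: "monom 1 s \<in> monic_polys s"
  by (simp add: monic_polys_def degree_monom_eq)

lemma monom_1_minus_in_monic_polys:
  assumes "\<forall>i\<ge>s. coeff r i = 0"
  shows "monom 1 s - r \<in> monic_polys s"
proof -
  define p where "p = monom 1 s - r"
  have cp: "coeff p s = 1" "\<forall>i>s. coeff p i = 0"
    using assms by (auto simp: p_def coeff_monom)
  have "degree p = s"
    by (rule antisym, rule degree_le) (use cp in \<open>auto intro: le_degree\<close>)
  then show ?thesis using cp by (simp add: monic_polys_def p_def[symmetric])
qed

lemma monom_1_mult_in_monic_polys:
  assumes "p \<in> monic_polys d" "d \<le> s"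
  shows "monom 1 (s - d) * p \<in> monic_polys s"
proof -
  have p: "p \<noteq> 0" "degree p = d" "lead_coeff p = 1"
    using assms(1) by (auto simp: monic_polys_def)
  have "degree (monom 1 (s - d) * p) = s"
    using p assms(2) by (simp add: degree_mult_eq degree_monom_eq)
  moreover have "lead_coeff (monom 1 (s - d) * p) = 1"
    unfolding lead_coeff_mult lead_coeff_monom p(3) by simp
  ultimately show ?thesis by (simp add: monic_polys_def)
qed

lemma coeff_diff_monic_polys:
  assumes "p \<in> monic_polys s" "q \<in> monic_polys s" "s \<le> i"
  shows "coeff (p - q) i = 0"
  using assms by (cases "i = s") (auto simp: monic_polys_def coeff_eq_0)

lemma krylov_iff_polyapp:
  "y \<in> krylov s B u \<longleftrightarrow> (\<exists>r. (\<forall>i\<ge>s. coeff r i = 0) \<and> y = polyapp r B u)"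
proof
  let ?P = "{polyapp r B u | r. \<forall>i\<ge>s. coeff r i = 0}"
  have "subspace ?P"
    unfolding subspace_def
  proof (intro conjI ballI allI)
    show "0 \<in> ?P" by (auto simp: polyapp_def intro!: exI[of _ 0])
  next
    fix x y assume "x \<in> ?P" "y \<in> ?P"
    then show "x + y \<in> ?P" by (force simp: polyapp_add[symmetric])
  next
    fix c x assume "x \<in> ?P"
    then show "c *\<^sub>R x \<in> ?P" by (force simp: polyapp_smult[symmetric])
  qed
  moreover have "{(matvec B ^^ i) u | i. i < s} \<subseteq> ?P"
    by (force simp: polyapp_monom_1[symmetric] coeff_monom)
  ultimately have "krylov s B u \<subseteq> ?P"
    unfolding krylov_def by (rule span_minimal[rotated])
  then show "y \<in> krylov s B u \<Longrightarrow> \<exists>r. (\<forall>i\<ge>s. coeff r i = 0) \<and> y = polyapp r B u"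
    by blast
next
  assume "\<exists>r. (\<forall>i\<ge>s. coeff r i = 0) \<and> y = polyapp r B u"
  then obtain r where r: "\<forall>i\<ge>s. coeff r i = 0" and y: "y = polyapp r B u" by blast
  show "y \<in> krylov s B u"
    unfolding y polyapp_def krylov_def
  proof (rule span_sum)
    fix i
    show "coeff r i *\<^sub>R (matvec B ^^ i) u \<in> span {(matvec B ^^ i) u | i. i < s}"
      using r by (cases "i < s") (auto intro: span_scale span_base span_zero)
  qed
qed

lemma grade_le_degree_of_annihilator:
  "p \<in> monic_polys d \<Longrightarrow> polyapp p B u = 0 \<Longrightarrow> grade B u \<le> d"
  unfolding grade_def by (rule Least_le) blast

lemma monic_annihilator_exists:
  fixes B :: "real^'n^'n"
  shows "\<exists>d. \<exists>p\<in>monic_polys d. polyapp p B u = 0"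
proof -
  let ?S = "\<lambda>k. (\<lambda>i. (matvec B ^^ i) u) ` {..<k}"
  have krylov_eq: "krylov k B u = span (?S k)" for k
    unfolding krylov_def by (rule arg_cong[where f = span]) auto
  have "\<exists>k. (matvec B ^^ k) u \<in> krylov k B u"
  proof (rule ccontr)
    assume new: "\<nexists>k. (matvec B ^^ k) u \<in> krylov k B u"
    have indep: "independent (?S k) \<and> card (?S k) = k" for k
    proof (induction k)
      case (Suc k)
      have not_in_span: "(matvec B ^^ k) u \<notin> span (?S k)"
        using new by (simp add: krylov_eq)
      then have "(matvec B ^^ k) u \<notin> ?S k"
        by (metis span_base)
      then show ?case
        using Suc.IH not_in_span by (simp add: lessThan_Suc independent_insert)
    qed (simp add: independent_empty)
    then have "card (?S (Suc DIM(real^'n))) \<le> DIM(real^'n)"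
      using independent_bound by blast
    then show False using indep[of "Suc DIM(real^'n)"] by linarith
  qed
  then obtain k r where r: "\<forall>i\<ge>k. coeff r i = 0" "(matvec B ^^ k) u = polyapp r B u"
    unfolding krylov_iff_polyapp by blast
  have "polyapp (monom 1 k - r) B u = 0"
    using r by (simp add: polyapp_diff polyapp_monom_1)
  then show ?thesis using monom_1_minus_in_monic_polys[OF r(1)] by blast
qed

lemma grade_annihilator:
  fixes B :: "real^'n^'n"
  obtains p where "p \<in> monic_polys (grade B u)" "polyapp p B u = 0"
  using LeastI_ex[OF monic_annihilator_exists[of B u]] unfolding grade_def[symmetric] by blast

lemma less_grade_iff:
  fixes B :: "real^'n^'n"
  shows "s < grade B u \<longleftrightarrow> (\<forall>q\<in>monic_polys s. polyapp q B u \<noteq> 0)"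
proof
  assume "s < grade B u"
  then show "\<forall>q\<in>monic_polys s. polyapp q B u \<noteq> 0"
    using grade_le_degree_of_annihilator by fastforce
next
  assume no_annihilator: "\<forall>q\<in>monic_polys s. polyapp q B u \<noteq> 0"
  show "s < grade B u"
  proof (rule ccontr)
    assume "\<not> s < grade B u"
    then have le: "grade B u \<le> s" by simp
    obtain p where p: "p \<in> monic_polys (grade B u)" "polyapp p B u = 0"
      by (rule grade_annihilator)
    have "(matvec B ^^ j) 0 = 0" for j by (induction j) simp_all
    then have "polyapp (monom 1 (s - grade B u) * p) B u = 0"
      by (simp add: polyapp_monom_1_mult p(2))
    then show False
      using no_annihilator monom_1_mult_in_monic_polys[OF p(1) le] by blast
  qed
qed

lemma annihilator_below_grade_eq_0:
  assumes "s \<le> grade B u" "\<forall>i\<ge>s. coeff t i = 0" "polyapp t B u = 0"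
  shows "t = 0"
proof (rule ccontr)
  assume "t \<noteq> 0"
  then have "degree t < s"
    using assms(2) leading_coeff_neq_0 not_less by blast
  moreover have "smult (1 / lead_coeff t) t \<in> monic_polys (degree t)"
    using \<open>t \<noteq> 0\<close> by (simp add: monic_polys_def)
  moreover have "polyapp (smult (1 / lead_coeff t) t) B u = 0"
    by (simp add: polyapp_smult assms(3))
  ultimately show False
    using assms(1) grade_le_degree_of_annihilator by fastforce
qed

lemma arnoldi_poly_unique:
  assumes "s \<le> grade B u"
  shows "\<exists>!p. p \<in> monic_polys s \<and> (\<forall>y\<in>krylov s B u. inner (polyapp p B u) y = 0)"
proof (rule ex_ex1I)
  have "subspace (krylov s B u)" by (simp add: krylov_def)
  then obtain y z where y: "y \<in> krylov s B u" and z: "\<And>x. x \<in> krylov s B u \<Longrightarrow> orthogonal z x"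
    and yz: "(matvec B ^^ s) u = y + z"
    using orthogonal_subspace_decomp_exists span_eq_iff by metis
  obtain r where r: "\<forall>i\<ge>s. coeff r i = 0" "y = polyapp r B u"
    using y krylov_iff_polyapp by blast
  have "polyapp (monom 1 s - r) B u = z"
    using yz r by (simp add: polyapp_diff polyapp_monom_1)
  then show "\<exists>p. p \<in> monic_polys s \<and> (\<forall>y\<in>krylov s B u. inner (polyapp p B u) y = 0)"
    using monom_1_minus_in_monic_polys[OF r(1)] z by (auto simp: orthogonal_def)
next
  fix p q
  assume p: "p \<in> monic_polys s \<and> (\<forall>y\<in>krylov s B u. inner (polyapp p B u) y = 0)"
     and q: "q \<in> monic_polys s \<and> (\<forall>y\<in>krylov s B u. inner (polyapp q B u) y = 0)"
  have low: "\<forall>i\<ge>s. coeff (p - q) i = 0"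
    using p q coeff_diff_monic_polys by blast
  then have "polyapp (p - q) B u \<in> krylov s B u"
    using krylov_iff_polyapp by blast
  then have "inner (polyapp (p - q) B u) (polyapp (p - q) B u) = 0"
    using p q by (simp add: polyapp_diff inner_diff_left)
  then have "p - q = 0"
    using annihilator_below_grade_eq_0[OF assms low] by simp
  then show "p = q" by simp
qed

lemma
  assumes "s \<le> grade B u"
  shows arnoldi_poly_in_monic_polys: "arnoldi_poly s B u \<in> monic_polys s"
    and arnoldi_vec_orthogonal_krylov: "y \<in> krylov s B u \<Longrightarrow> inner (arnoldi_vec s B u) y = 0"
  using theI'[OF arnoldi_poly_unique[OF assms]]
  unfolding arnoldi_poly_def[symmetric] arnoldi_vec_def by auto

lemma arnoldi_vec_nonzero:
  fixes B :: "real^'n^'n"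
  assumes "s < grade B u"
  shows "arnoldi_vec s B u \<noteq> 0"
proof -
  have "arnoldi_poly s B u \<in> monic_polys s"
    using assms by (simp add: arnoldi_poly_in_monic_polys)
  then show ?thesis using assms unfolding arnoldi_vec_def less_grade_iff by blast
qed

lemma inner_polyapp_eq_inner_arnoldi_vec:
  assumes "s \<le> grade B u" "q \<in> monic_polys s"
    and "\<And>y. y \<in> krylov s B u \<Longrightarrow> inner z y = 0"
  shows "inner (polyapp q B u) z = inner (arnoldi_vec s B u) z"
proof -
  have "polyapp q B u - arnoldi_vec s B u \<in> krylov s B u"
    unfolding arnoldi_vec_def polyapp_diff[symmetric] krylov_iff_polyapp
    using coeff_diff_monic_polys[OF assms(2) arnoldi_poly_in_monic_polys[OF assms(1)]] by blast
  then have "inner (polyapp q B u - arnoldi_vec s B u) z = 0"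
    using assms(3) inner_commute by metis
  then show ?thesis by (simp add: inner_diff_left)
qed

lemma norm_arnoldi_vec_le:
  assumes "s \<le> grade B u" "q \<in> monic_polys s"
  shows "norm (arnoldi_vec s B u) \<le> norm (polyapp q B u)"
proof -
  let ?a = "arnoldi_vec s B u"
  have "norm ?a ^ 2 = inner (polyapp q B u) ?a"
    using inner_polyapp_eq_inner_arnoldi_vec[OF assms]
      arnoldi_vec_orthogonal_krylov[OF assms(1)]
    by (simp add: inner_commute power2_norm_eq_inner)
  also have "\<dots> \<le> norm (polyapp q B u) * norm ?a"
    by (rule norm_cauchy_schwarz)
  finally show ?thesis
    by (cases "?a = 0") (simp_all add: power2_eq_square)
qed

lemma INF_norm_polyapp_le:
  "q \<in> monic_polys s \<Longrightarrow> (INF p\<in>monic_polys s. norm (polyapp p B u)) \<le> norm (polyapp q B u)"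
  by (rule cINF_lower) (auto intro: bdd_belowI[of _ 0])

lemma INF_norm_polyapp_eq_norm_arnoldi_vec:
  assumes "s \<le> grade B u"
  shows "(INF q\<in>monic_polys s. norm (polyapp q B u)) = norm (arnoldi_vec s B u)"
proof (rule antisym)
  show "(INF q\<in>monic_polys s. norm (polyapp q B u)) \<le> norm (arnoldi_vec s B u)"
    unfolding arnoldi_vec_def
    by (intro INF_norm_polyapp_le arnoldi_poly_in_monic_polys[OF assms])
  show "norm (arnoldi_vec s B u) \<le> (INF q\<in>monic_polys s. norm (polyapp q B u))"
    using monom_1_in_monic_polys norm_arnoldi_vec_le[OF assms]
    by (intro cINF_greatest) auto
qed

lemma norm_normalize_vec: "x \<noteq> 0 \<Longrightarrow> norm (normalize_vec x) = 1"
  by (simp add: normalize_vec_def)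

lemma inner_normalize_vec_right: "inner a (normalize_vec b) = inner a b / norm b"
  by (simp add: normalize_vec_def)

text \<open>No nonvanishing hypothesis is needed here, as \<open>normalize_vec 0 = 0\<close>.\<close>

lemma inner_polyapp_transpose_normalize_arnoldi_vec:
  assumes "s \<le> grade B u" "q \<in> monic_polys s"
  shows "inner u (polyapp q (transpose B) (normalize_vec (arnoldi_vec s B u)))
    = norm (arnoldi_vec s B u)"
proof -
  let ?W = "arnoldi_vec s B u"
  have "inner u (polyapp q (transpose B) (normalize_vec ?W)) = inner (polyapp q B u) (normalize_vec ?W)"
    by (rule inner_polyapp_transpose[symmetric])
  also have "\<dots> = inner ?W (normalize_vec ?W)"
    by (rule inner_polyapp_eq_inner_arnoldi_vec[OF assms])
      (simp add: normalize_vec_def arnoldi_vec_orthogonal_krylov[OF assms(1)])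
  also have "\<dots> = norm ?W"
    by (simp add: inner_normalize_vec_right power2_eq_square flip: power2_norm_eq_inner)
  finally show ?thesis .
qed

lemma less_grade_transpose_normalize_arnoldi_vec:
  fixes B :: "real^'n^'n"
  assumes "s < grade B u"
  shows "s < grade (transpose B) (normalize_vec (arnoldi_vec s B u))"
  unfolding less_grade_iff
  using inner_polyapp_transpose_normalize_arnoldi_vec[OF less_imp_le[OF assms]]
    arnoldi_vec_nonzero[OF assms] by force

lemma norm_arnoldi_vec_eq_inner_arnoldi_vec_transpose:
  fixes B :: "real^'n^'n"
  assumes "s < grade B u"
  shows "norm (arnoldi_vec s B u)
    = inner u (arnoldi_vec s (transpose B) (normalize_vec (arnoldi_vec s B u)))"
  unfolding arnoldi_vec_def[of s "transpose B"]
  using less_grade_transpose_normalize_arnoldi_vec[OF assms]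
  by (intro inner_polyapp_transpose_normalize_arnoldi_vec[symmetric] less_imp_le[OF assms]
      arnoldi_poly_in_monic_polys) simp

lemma bdd_above_INF_norm_polyapp:
  fixes B :: "real^'n^'n"
  shows "bdd_above ((\<lambda>v. INF q\<in>monic_polys s. norm (polyapp q B v)) ` {v. norm v = 1})"
proof -
  obtain K where K: "K > 0" "\<And>x. norm (B *v x) \<le> K * norm x"
    using linear_bounded_pos[OF matrix_vector_mul_linear] by blast
  have power_bound: "norm ((matvec B ^^ i) x) \<le> K ^ i * norm x" for i x
  proof (induction i)
    case (Suc i)
    have "norm ((matvec B ^^ Suc i) x) \<le> K * norm ((matvec B ^^ i) x)" using K(2) by simp
    also have "\<dots> \<le> K * (K ^ i * norm x)" using Suc K(1) by (simp add: mult_left_mono)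
    finally show ?case by simp
  qed simp
  have "(INF q\<in>monic_polys s. norm (polyapp q B v)) \<le> K ^ s" if "norm v = 1" for v
  proof -
    have "(INF q\<in>monic_polys s. norm (polyapp q B v)) \<le> norm (polyapp (monom 1 s) B v)"
      by (rule INF_norm_polyapp_le[OF monom_1_in_monic_polys])
    also have "\<dots> \<le> K ^ s" using power_bound[of s v] that by (simp add: polyapp_monom_1)
    finally show ?thesis .
  qed
  then show ?thesis by (intro bdd_aboveI2[where M = "K ^ s"]) simp
qed

lemma INF_norm_polyapp_le_Phi:
  fixes B :: "real^'n^'n"
  assumes "norm v = 1"
  shows "(INF q\<in>monic_polys s. norm (polyapp q B v)) \<le> Phi s B"
  unfolding Phi_def using assms by (intro cSUP_upper bdd_above_INF_norm_polyapp) simp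

lemma Phi_nonneg:
  fixes B :: "real^'n^'n"
  shows "0 \<le> Phi s B"
proof -
  have "0 \<le> (INF q\<in>monic_polys s. norm (polyapp q B (axis undefined 1)))"
    using monom_1_in_monic_polys by (intro cINF_greatest) auto
  also have "\<dots> \<le> Phi s B"
    by (rule INF_norm_polyapp_le_Phi) simp
  finally show ?thesis .
qed

lemma Phi_le_Phi_transpose:
  fixes B :: "real^'n^'n"
  shows "Phi s B \<le> Phi s (transpose B)"
  unfolding Phi_def[of s B]
proof (rule cSUP_least)
  show "{v::real^'n. norm v = 1} \<noteq> {}"
    using norm_axis_1 by blast
next
  fix v :: "real^'n"
  assume "v \<in> {v. norm v = 1}"
  then have v: "norm v = 1" by simp
  show "(INF q\<in>monic_polys s. norm (polyapp q B v)) \<le> Phi s (transpose B)"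
  proof (cases "s < grade B v")
    case True
    let ?w = "normalize_vec (arnoldi_vec s B v)"
    have "(INF q\<in>monic_polys s. norm (polyapp q B v)) = inner v (arnoldi_vec s (transpose B) ?w)"
      using INF_norm_polyapp_eq_norm_arnoldi_vec[OF less_imp_le[OF True]]
        norm_arnoldi_vec_eq_inner_arnoldi_vec_transpose[OF True] by simp
    also have "\<dots> \<le> norm (arnoldi_vec s (transpose B) ?w)"
      using norm_cauchy_schwarz[of v] v by simp
    also have "\<dots> = (INF q\<in>monic_polys s. norm (polyapp q (transpose B) ?w))"
      using less_grade_transpose_normalize_arnoldi_vec[OF True]
      by (simp add: INF_norm_polyapp_eq_norm_arnoldi_vec)
    also have "\<dots> \<le> Phi s (transpose B)"
      using arnoldi_vec_nonzero[OF True] by (intro INF_norm_polyapp_le_Phi norm_normalize_vec)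
    finally show ?thesis .
  next
    case False
    then obtain q where q: "q \<in> monic_polys s" "polyapp q B v = 0"
      unfolding less_grade_iff by blast
    then show ?thesis
      using INF_norm_polyapp_le[OF q(1), of B v] Phi_nonneg[of s "transpose B"] by simp
  qed
qed

lemma Phi_transpose:
  fixes B :: "real^'n^'n"
  shows "Phi s (transpose B) = Phi s B"
  using Phi_le_Phi_transpose[of s B] Phi_le_Phi_transpose[of s "transpose B"] by simp

lemma eq_iff_parallel_of_inner_eq_divide:
  fixes x y :: "real^'n"
  assumes "norm x = 1" "norm y = 1" "a > 0" "b > 0" "inner x y = a / b"
  shows "a = b \<longleftrightarrow> (\<exists>\<alpha>. \<alpha> \<noteq> 0 \<and> x = \<alpha> *\<^sub>R y)"
proof
  assume "a = b"
  then have "inner (x - y) (x - y) = 0"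
    using assms by (simp add: inner_diff_left inner_diff_right inner_commute norm_eq_1)
  then show "\<exists>\<alpha>. \<alpha> \<noteq> 0 \<and> x = \<alpha> *\<^sub>R y" by (intro exI[of _ 1]) simp
next
  assume "\<exists>\<alpha>. \<alpha> \<noteq> 0 \<and> x = \<alpha> *\<^sub>R y"
  then obtain \<alpha> where x: "x = \<alpha> *\<^sub>R y" by blast
  then have "\<bar>\<alpha>\<bar> = 1" "a / b = \<alpha>"
    using assms by (simp_all add: norm_eq_1)
  moreover have "a / b > 0" using assms by simp
  ultimately show "a = b" by simp
qed

context
  fixes A :: "real^'n^'n" and v0 :: "real^'n" and s :: nat
  assumes v0_unit: "norm v0 = 1" and grade_v0: "s < grade A v0"
begin

lemma aci_v_invariant: "s < grade A (aci_v s A v0 k) \<and> norm (aci_v s A v0 k) = 1"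
proof (induction k)
  case (Suc k)
  let ?w = "normalize_vec (arnoldi_vec s A (aci_v s A v0 k))"
  have "s < grade (transpose A) ?w"
    using Suc.IH by (simp add: less_grade_transpose_normalize_arnoldi_vec)
  then show ?case
    using less_grade_transpose_normalize_arnoldi_vec[of s "transpose A" ?w]
    by (simp add: Let_def norm_normalize_vec arnoldi_vec_nonzero)
qed (simp add: v0_unit grade_v0)

lemma aci_w_grade: "s < grade (transpose A) (aci_w s A v0 k)"
  unfolding aci_w_def aci_wt_def
  using aci_v_invariant by (simp add: less_grade_transpose_normalize_arnoldi_vec)

lemma aci_wt_nonzero: "aci_wt s A v0 k \<noteq> 0"
  unfolding aci_wt_def using aci_v_invariant by (simp add: arnoldi_vec_nonzero)

lemma aci_vt_next_nonzero: "aci_vt_next s A v0 k \<noteq> 0"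
  unfolding aci_vt_next_def using aci_w_grade by (simp add: arnoldi_vec_nonzero)

lemma aci_w_norm: "norm (aci_w s A v0 k) = 1"
  unfolding aci_w_def using aci_wt_nonzero by (rule norm_normalize_vec)

lemma aci_v_Suc: "aci_v s A v0 (Suc k) = normalize_vec (aci_vt_next s A v0 k)"
  by (simp add: Let_def aci_vt_next_def aci_w_def aci_wt_def)

lemma norm_aci_wt_eq_inner: "norm (aci_wt s A v0 k) = inner (aci_v s A v0 k) (aci_vt_next s A v0 k)"
  unfolding aci_vt_next_def aci_w_def aci_wt_def
  using aci_v_invariant by (simp add: norm_arnoldi_vec_eq_inner_arnoldi_vec_transpose)

lemma norm_aci_vt_next_eq_inner:
  "norm (aci_vt_next s A v0 k) = inner (aci_w s A v0 k) (aci_wt s A v0 (Suc k))"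
  unfolding aci_wt_def[of _ _ _ "Suc k"] aci_v_Suc aci_vt_next_def
  using norm_arnoldi_vec_eq_inner_arnoldi_vec_transpose[OF aci_w_grade] by simp

lemma norm_aci_wt_le_vt_next: "norm (aci_wt s A v0 k) \<le> norm (aci_vt_next s A v0 k)"
  using norm_cauchy_schwarz[of "aci_v s A v0 k" "aci_vt_next s A v0 k"] aci_v_invariant
  by (simp add: norm_aci_wt_eq_inner)

lemma norm_aci_vt_next_le_wt_Suc: "norm (aci_vt_next s A v0 k) \<le> norm (aci_wt s A v0 (Suc k))"
  using norm_cauchy_schwarz[of "aci_w s A v0 k" "aci_wt s A v0 (Suc k)"] aci_w_norm
  by (simp add: norm_aci_vt_next_eq_inner)

lemma norm_aci_vt_next_le_Phi: "norm (aci_vt_next s A v0 k) \<le> Phi s (transpose A)"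
  unfolding aci_vt_next_def
  using aci_w_grade aci_w_norm
  by (metis INF_norm_polyapp_eq_norm_arnoldi_vec INF_norm_polyapp_le_Phi less_imp_le)

lemma norm_aci_wt_eq_vt_next_iff:
  "norm (aci_wt s A v0 k) = norm (aci_vt_next s A v0 k) \<longleftrightarrow>
    (\<exists>\<alpha>. \<alpha> \<noteq> 0 \<and> aci_v s A v0 k = \<alpha> *\<^sub>R aci_v s A v0 (Suc k))"
proof (rule eq_iff_parallel_of_inner_eq_divide)
  show "inner (aci_v s A v0 k) (aci_v s A v0 (Suc k))
    = norm (aci_wt s A v0 k) / norm (aci_vt_next s A v0 k)"
    unfolding aci_v_Suc inner_normalize_vec_right norm_aci_wt_eq_inner ..
qed (use aci_v_invariant aci_wt_nonzero aci_vt_next_nonzero in \<open>auto simp del: aci_v.simps\<close>)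

lemma norm_aci_vt_next_eq_wt_Suc_iff:
  "norm (aci_vt_next s A v0 k) = norm (aci_wt s A v0 (Suc k)) \<longleftrightarrow>
    (\<exists>\<beta>. \<beta> \<noteq> 0 \<and> aci_w s A v0 k = \<beta> *\<^sub>R aci_w s A v0 (Suc k))"
proof (rule eq_iff_parallel_of_inner_eq_divide)
  show "inner (aci_w s A v0 k) (aci_w s A v0 (Suc k))
    = norm (aci_vt_next s A v0 k) / norm (aci_wt s A v0 (Suc k))"
    unfolding aci_w_def[of _ _ _ "Suc k"] inner_normalize_vec_right norm_aci_vt_next_eq_inner ..
qed (use aci_w_norm aci_wt_nonzero aci_vt_next_nonzero in auto)

end

theorem theorem3p3:
  fixes A :: "real^'n^'n" and v0 :: "real^'n" and s :: nat
  assumes "1 \<le> s" and "s < minpoly_deg A"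
    and "norm v0 = 1" and "grade A v0 \<ge> s + 1"
  shows "(\<forall>k. aci_wt s A v0 k \<noteq> 0 \<and> aci_vt_next s A v0 k \<noteq> 0 \<and>
             grade A (aci_v s A v0 k) \<ge> s + 1 \<and>
             grade (transpose A) (aci_w s A v0 k) \<ge> s + 1) \<and>
        (\<forall>k. norm (aci_wt s A v0 k) \<le> norm (aci_vt_next s A v0 k) \<and>
             norm (aci_vt_next s A v0 k) \<le> norm (aci_wt s A v0 (Suc k)) \<and>
             norm (aci_wt s A v0 (Suc k)) \<le> norm (aci_vt_next s A v0 (Suc k)) \<and>
             norm (aci_vt_next s A v0 (Suc k)) \<le> Phi s (transpose A)) \<and>
        Phi s (transpose A) = Phi s A \<and>
        (\<forall>k. norm (aci_wt s A v0 k) = norm (aci_vt_next s A v0 k) \<longleftrightarrow>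
             (\<exists>\<alpha>. \<alpha> \<noteq> 0 \<and> aci_v s A v0 k = \<alpha> *\<^sub>R aci_v s A v0 (Suc k))) \<and>
        (\<forall>k. norm (aci_vt_next s A v0 k) = norm (aci_wt s A v0 (Suc k)) \<longleftrightarrow>
             (\<exists>\<beta>. \<beta> \<noteq> 0 \<and> aci_w s A v0 k = \<beta> *\<^sub>R aci_w s A v0 (Suc k)))"
proof -
  have grade_v0: "s < grade A v0" using assms(4) by simp
  note aci = aci_v_invariant[OF assms(3) grade_v0] aci_w_grade[OF assms(3) grade_v0]
    aci_wt_nonzero[OF assms(3) grade_v0] aci_vt_next_nonzero[OF assms(3) grade_v0]
    norm_aci_wt_le_vt_next[OF assms(3) grade_v0] norm_aci_vt_next_le_wt_Suc[OF assms(3) grade_v0]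
    norm_aci_vt_next_le_Phi[OF assms(3) grade_v0]
    norm_aci_wt_eq_vt_next_iff[OF assms(3) grade_v0]
    norm_aci_vt_next_eq_wt_Suc_iff[OF assms(3) grade_v0]
  show ?thesis
    using aci Phi_transpose[of s A] by (simp add: Suc_le_eq)
qed

end
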